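(* Let $X_n$ and $Y_n$ be the number of centered arcs and the number of pairs of coupled arcs, respectively, of a uniformly random perfect matching of $[2n]$. Then for all $k,\ell\ge0$, $$\lim_{n\to\infty}\Pr(X_n=k)=\frac{e^{-1/2}}{2^kk!},\qquad \lim_{n\to\infty}\Pr(Y_n=\ell)=\frac{e^{-1/4}}{4^\ell\ell!},$$ i.e. $X_n$ and $Y_n$ converge to Poisson laws with parameters $1/2$ and $1/4$, and moreover $$\lim_{n\to\infty}\Pr(X_n=k,Y_n=\ell)=\frac{e^{-3/4}}{2^k4^\ell k!\ell!}.$$
   Context: $[2n]=\{1,\dots,2n\}$. For $A\subseteq[2n]$ let $\overline{A}=\{2n+1-i: i\in A\}$. An arc $\{i,j\}$ of a perfect matching $M$ of $[2n]$ is centered if $\overline{\{i,j\}}=\{i,j\}$; coupled if it is not centered but $\overline{\{i,j\}}\in M$, in which case $\{i,j\}$ and $\overline{\{i,j\}}$ form a pair of coupled arcs. *)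

theory Defs
  imports "HOL-Analysis.Analysis"
begin

definition perfect_matchings :: "nat \<Rightarrow> nat set set set" where
  "perfect_matchings n =
     {M. (\<forall>a\<in>M. card a = 2) \<and> \<Union>M = {1..2*n} \<and>
         (\<forall>a\<in>M. \<forall>b\<in>M. a \<noteq> b \<longrightarrow> a \<inter> b = {})}"

definition refl_set :: "nat \<Rightarrow> nat set \<Rightarrow> nat set" where
  "refl_set n A = (\<lambda>i. 2*n + 1 - i) ` A"

definition centered_arcs :: "nat \<Rightarrow> nat set set \<Rightarrow> nat set set" where
  "centered_arcs n M = {a \<in> M. refl_set n a = a}"

definition coupled_arcs :: "nat \<Rightarrow> nat set set \<Rightarrow> nat set set" where
  "coupled_arcs n M = {a \<in> M. refl_set n a \<noteq> a \<and> refl_set n a \<in> M}"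

definition num_centered :: "nat \<Rightarrow> nat set set \<Rightarrow> nat" where
  "num_centered n M = card (centered_arcs n M)"

definition num_coupled_pairs :: "nat \<Rightarrow> nat set set \<Rightarrow> nat" where
  "num_coupled_pairs n M = card {{a, refl_set n a} | a. a \<in> coupled_arcs n M}"

definition pm_prob :: "nat \<Rightarrow> (nat set set \<Rightarrow> bool) \<Rightarrow> real" where
  "pm_prob n P = real (card {M \<in> perfect_matchings n. P M}) / real (card (perfect_matchings n))"

end

theory Submission
  imports Defs "HOL-Real_Asymp.Real_Asymp"
begin

(* Method of binomial moments. Let s be the reflection i -> 2n+1-i, X the number of centered
   arcs and Y the number of pairs of coupled arcs of M. Marking a centered arc amounts to choosing
   an endpoint x with {x, s x} in M (two choices per arc); marking a pair of coupled arcs amounts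
   to choosing an ordered pair (x, y) with {x, y} and {s x, s y} in M (four choices per pair).
   Deleting the marked arcs leaves an arbitrary perfect matching of a smaller s-invariant set, on
   which X, resp. Y, is smaller by exactly one. This double counting yields recurrences whose
   solution is
     E[(X choose a) (Y choose b)] = prod_{i < a+2b} (n-i)/(2(n-i)-1) / (a! b!)
                                  --> (1/2)^a (1/4)^b / (a! b!),
   the joint binomial moments of independent Poisson(1/2) and Poisson(1/4) variables.
   Inclusion-exclusion, [X = k] = sum_a (-1)^(a-k) (a choose k) (X choose a), and Tannery's
   theorem, dominating the moments by 1/(a! b!), transfer this to the point probabilities. *)

definition perfect_matchings_on :: "'a set \<Rightarrow> 'a set set set" where
  "perfect_matchings_on V = {M. (\<forall>a\<in>M. card a = 2) \<and> \<Union>M = V \<and>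
     (\<forall>a\<in>M. \<forall>b\<in>M. a \<noteq> b \<longrightarrow> a \<inter> b = {})}"

lemma perfect_matchings_eq: "perfect_matchings n = perfect_matchings_on {1..2*n}"
  unfolding perfect_matchings_def perfect_matchings_on_def ..

lemma perfect_matchings_onD:
  assumes "M \<in> perfect_matchings_on V" and "a \<in> M"
  shows "card a = 2" "a \<subseteq> V" "b \<in> M \<Longrightarrow> a \<noteq> b \<Longrightarrow> a \<inter> b = {}"
  using assms unfolding perfect_matchings_on_def by auto

lemma perfect_matchings_on_Union: "M \<in> perfect_matchings_on V \<Longrightarrow> \<Union>M = V"
  unfolding perfect_matchings_on_def by simp

lemma perfect_matchings_onI:
  assumes "\<And>a. a \<in> M \<Longrightarrow> card a = 2" "\<Union>M = V"
    "\<And>a b. a \<in> M \<Longrightarrow> b \<in> M \<Longrightarrow> a \<noteq> b \<Longrightarrow> a \<inter> b = {}"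
  shows "M \<in> perfect_matchings_on V"
  using assms unfolding perfect_matchings_on_def by simp

lemma finite_perfect_matchings_on: "finite V \<Longrightarrow> finite (perfect_matchings_on V)"
proof (rule finite_subset)
  show "perfect_matchings_on V \<subseteq> Pow (Pow V)"
    unfolding perfect_matchings_on_def by blast
qed simp

lemma finite_perfect_matching: "M \<in> perfect_matchings_on V \<Longrightarrow> finite V \<Longrightarrow> finite M"
  by (meson PowI finite_Pow_iff finite_subset perfect_matchings_onD(2) subsetI)

lemma perfect_matchings_on_subset:
  assumes M: "M \<in> perfect_matchings_on V" and "C \<subseteq> M"
  shows "C \<in> perfect_matchings_on (\<Union>C)"
  using perfect_matchings_onD(1,3)[OF M] \<open>C \<subseteq> M\<close> by (intro perfect_matchings_onI) auto

lemma card_perfect_matching: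
  assumes M: "M \<in> perfect_matchings_on V" and "finite V"
  shows "card V = 2 * card M"
proof -
  have "card (\<Union>M) = sum card M"
  proof (rule card_Union_disjoint)
    show "pairwise disjnt M"
      using perfect_matchings_onD(3)[OF M] by (auto simp: pairwise_def disjnt_def)
    show "finite a" if "a \<in> M" for a
      using perfect_matchings_onD(1)[OF M that] by (simp add: card_ge_0_finite)
  qed
  also have "\<dots> = 2 * card M"
    using perfect_matchings_onD(1)[OF M] by simp
  finally have "card (\<Union>M) = 2 * card M" .
  with M show ?thesis by (simp add: perfect_matchings_on_def)
qed

lemma perfect_matchings_on_Un:
  assumes M: "M \<in> perfect_matchings_on (V - W)" and p: "p \<in> perfect_matchings_on W" and "W \<subseteq> V"
  shows "M \<union> p \<in> perfect_matchings_on V"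
proof (rule perfect_matchings_onI)
  show "card a = 2" if "a \<in> M \<union> p" for a
    using that perfect_matchings_onD(1)[OF M] perfect_matchings_onD(1)[OF p] by auto
  show "\<Union>(M \<union> p) = V"
    using perfect_matchings_on_Union[OF M] perfect_matchings_on_Union[OF p] \<open>W \<subseteq> V\<close> by auto
  show "a \<inter> b = {}" if ab: "a \<in> M \<union> p" "b \<in> M \<union> p" "a \<noteq> b" for a b
  proof -
    consider "a \<in> M" "b \<in> M" | "a \<in> p" "b \<in> p" | "a \<subseteq> V - W" "b \<subseteq> W" | "a \<subseteq> W" "b \<subseteq> V - W"
      using ab(1,2) perfect_matchings_onD(2)[OF M] perfect_matchings_onD(2)[OF p] by auto
    then show ?thesis
      using perfect_matchings_onD(3)[OF M] perfect_matchings_onD(3)[OF p] ab(3) by cases auto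
  qed
qed

lemma perfect_matchings_on_disjoint:
  assumes M: "M \<in> perfect_matchings_on (V - W)" and p: "p \<in> perfect_matchings_on W"
  shows "M \<inter> p = {}"
proof -
  have "a = {}" if "a \<in> M" "a \<in> p" for a
    using perfect_matchings_onD(2)[OF M that(1)] perfect_matchings_onD(2)[OF p that(2)] by blast
  then show ?thesis
    using perfect_matchings_onD(1)[OF M] by fastforce
qed

lemma perfect_matchings_on_Diff:
  assumes N: "N \<in> perfect_matchings_on V" and p: "p \<in> perfect_matchings_on W" and "p \<subseteq> N"
  shows "N - p \<in> perfect_matchings_on (V - W)"
proof (rule perfect_matchings_onI)
  show "\<Union>(N - p) = V - W"
  proof (intro equalityI subsetI)
    fix x assume "x \<in> \<Union>(N - p)"
    then obtain a where a: "a \<in> N" "a \<notin> p" "x \<in> a" by blast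
    have "x \<notin> b" if "b \<in> p" for b
      using perfect_matchings_onD(3)[OF N a(1), of b] that a(2,3) \<open>p \<subseteq> N\<close> by auto
    then show "x \<in> V - W"
      using perfect_matchings_onD(2)[OF N a(1)] a(3) perfect_matchings_on_Union[OF p] by auto
  next
    fix x assume x: "x \<in> V - W"
    then obtain a where "a \<in> N" "x \<in> a"
      using perfect_matchings_on_Union[OF N] by auto
    moreover have "a \<notin> p"
      using perfect_matchings_on_Union[OF p] x \<open>x \<in> a\<close> by auto
    ultimately show "x \<in> \<Union>(N - p)" by auto
  qed
qed (use perfect_matchings_onD(1,3)[OF N] in auto)

lemma perfect_matchings_on_Un_bij:
  assumes p: "p \<in> perfect_matchings_on W" and "W \<subseteq> V"
  shows "bij_betw (\<lambda>M. M \<union> p) (perfect_matchings_on (V - W)) {M \<in> perfect_matchings_on V. p \<subseteq> M}"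
proof (rule bij_betw_byWitness[where f' = "\<lambda>M. M - p"])
  show "\<forall>M\<in>perfect_matchings_on (V - W). M \<union> p - p = M"
    using perfect_matchings_on_disjoint[OF _ p] by blast
  show "(\<lambda>M. M - p) ` {M \<in> perfect_matchings_on V. p \<subseteq> M} \<subseteq> perfect_matchings_on (V - W)"
    using perfect_matchings_on_Diff[OF _ p] by blast
  show "(\<lambda>M. M \<union> p) ` perfect_matchings_on (V - W) \<subseteq> {M \<in> perfect_matchings_on V. p \<subseteq> M}"
    using perfect_matchings_on_Un[OF _ p \<open>W \<subseteq> V\<close>] by auto
qed auto

lemma doubleton_if_card_2:
  assumes "card a = 2" "x \<in> a" "y \<in> a" "x \<noteq> y"
  shows "a = {x, y}"
  using assms by (auto simp: card_2_iff)

lemma perfect_matching_doubleton: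
  assumes "M \<in> perfect_matchings_on V" "{x, y} \<in> M"
  shows "x \<noteq> y" "x \<in> V" "y \<in> V"
  using perfect_matchings_onD(1,2)[OF assms] by (auto simp: card_insert_if)

lemma perfect_matching_partner:
  assumes M: "M \<in> perfect_matchings_on V" and "x \<in> V"
  shows "\<exists>!y. {x, y} \<in> M"
proof -
  obtain a where a: "a \<in> M" "x \<in> a"
    using assms unfolding perfect_matchings_on_def by auto
  then obtain y where "a = {x, y}"
    using perfect_matchings_onD(1)[OF M a(1)] by (auto simp: card_2_iff)
  moreover have "z = y" if "{x, z} \<in> M" for z
    using perfect_matchings_onD[OF M that] a \<open>a = {x, y}\<close>
    by (metis card_2_iff doubleton_eq_iff insert_disjoint(1) insert_iff)
  ultimately show ?thesis using a by blast
qed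

lemma perfect_matchings_on_empty: "perfect_matchings_on {} = {{}}"
proof -
  have "M = {}" if "M \<in> perfect_matchings_on {}" for M :: "'a set set"
    using perfect_matchings_onD(1,2)[OF that] by fastforce
  then show ?thesis by (auto simp: perfect_matchings_on_def)
qed

lemma perfect_matchings_on_doubleton: "x \<noteq> y \<Longrightarrow> {{x, y}} \<in> perfect_matchings_on {x, y}"
  by (simp add: perfect_matchings_on_def)

lemma perfect_matchings_on_by_partner:
  assumes x: "x \<in> V"
  shows "perfect_matchings_on V = (\<Union>y\<in>V - {x}. {M \<in> perfect_matchings_on V. {x, y} \<in> M})"
    and "disjoint_family_on (\<lambda>y. {M \<in> perfect_matchings_on V. {x, y} \<in> M}) (V - {x})"
proof -
  show "perfect_matchings_on V = (\<Union>y\<in>V - {x}. {M \<in> perfect_matchings_on V. {x, y} \<in> M})"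
  proof (intro equalityI subsetI)
    fix M assume M: "M \<in> perfect_matchings_on V"
    then obtain y where y: "{x, y} \<in> M"
      using perfect_matching_partner[OF M x] by blast
    with M perfect_matching_doubleton[OF M y]
    show "M \<in> (\<Union>y\<in>V - {x}. {M \<in> perfect_matchings_on V. {x, y} \<in> M})" by blast
  qed blast
  show "disjoint_family_on (\<lambda>y. {M \<in> perfect_matchings_on V. {x, y} \<in> M}) (V - {x})"
    unfolding disjoint_family_on_def using perfect_matching_partner[OF _ x] by blast
qed

definition odd_double_fact :: "nat \<Rightarrow> nat" where
  "odd_double_fact n = (\<Prod>i<n. 2 * i + 1)"

lemma card_perfect_matchings_on:
  "finite V \<Longrightarrow> card V = 2 * n \<Longrightarrow> card (perfect_matchings_on V) = odd_double_fact n"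
proof (induction n arbitrary: V)
  case 0
  then show ?case by (simp add: perfect_matchings_on_empty odd_double_fact_def)
next
  case (Suc n)
  then obtain x where x: "x \<in> V" by fastforce
  have card_partner: "card {M \<in> perfect_matchings_on V. {x, y} \<in> M} = odd_double_fact n"
    if y: "y \<in> V - {x}" for y
  proof -
    have "bij_betw (\<lambda>M. M \<union> {{x, y}}) (perfect_matchings_on (V - {x, y}))
        {M \<in> perfect_matchings_on V. {x, y} \<in> M}"
      using perfect_matchings_on_Un_bij[OF perfect_matchings_on_doubleton[of x y]] x y by auto
    moreover have "card (V - {x, y}) = 2 * n"
      using Suc.prems x y by (auto simp: card_Diff_subset)
    ultimately show ?thesis
      using Suc.IH[of "V - {x, y}"] Suc.prems(1) by (simp add: bij_betw_same_card[symmetric])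
  qed
  have "card (perfect_matchings_on V) = card (\<Union>y\<in>V - {x}. {M \<in> perfect_matchings_on V. {x, y} \<in> M})"
    by (rule arg_cong[OF perfect_matchings_on_by_partner(1)[OF x]])
  also have "\<dots> = (\<Sum>y\<in>V - {x}. card {M \<in> perfect_matchings_on V. {x, y} \<in> M})"
    using Suc.prems(1)
    by (intro card_UN_disjoint' perfect_matchings_on_by_partner(2)[OF x]) (auto simp: finite_perfect_matchings_on)
  also have "\<dots> = (\<Sum>y\<in>V - {x}. odd_double_fact n)"
    by (simp add: card_partner)
  also have "\<dots> = (2 * n + 1) * odd_double_fact n"
    using Suc.prems x by simp
  finally show ?case by (simp add: odd_double_fact_def)
qed

lemma card_ordered_arcs:
  assumes C: "C \<in> perfect_matchings_on U" and "finite U"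
  shows "card {(x, y). {x, y} \<in> C} = 2 * card C"
proof -
  have "x \<in> U" if "{x, y} \<in> C" for x y
    using perfect_matchings_onD(2)[OF C that] by blast
  with perfect_matching_partner[OF C] have "bij_betw fst {(x, y). {x, y} \<in> C} U"
    unfolding bij_betw_def inj_on_def by (auto simp: image_iff) metis
  then show ?thesis
    using card_perfect_matching[OF C \<open>finite U\<close>] by (simp add: bij_betw_same_card)
qed

definition fpf_involution_on :: "'a set \<Rightarrow> ('a \<Rightarrow> 'a) \<Rightarrow> bool" where
  "fpf_involution_on V s \<longleftrightarrow> (\<forall>x\<in>V. s x \<in> V \<and> s (s x) = x \<and> s x \<noteq> x)"

lemma fpf_involution_onD:
  assumes "fpf_involution_on V s" "x \<in> V"
  shows "s x \<in> V" "s (s x) = x" "s x \<noteq> x"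
  using assms unfolding fpf_involution_on_def by auto

lemma fpf_involution_on_Diff:
  "fpf_involution_on V s \<Longrightarrow> s ` W \<subseteq> W \<Longrightarrow> fpf_involution_on (V - W) s"
  unfolding fpf_involution_on_def by (metis Diff_iff image_subset_iff)

lemma fpf_involution_on_subset:
  "fpf_involution_on V s \<Longrightarrow> W \<subseteq> V \<Longrightarrow> s ` W \<subseteq> W \<Longrightarrow> fpf_involution_on W s"
  unfolding fpf_involution_on_def by blast

lemma fpf_involution_remove_orbit:
  assumes s: "fpf_involution_on V s" and "x \<in> V"
  shows "fpf_involution_on (V - {x, s x}) s" "card (V - {x, s x}) = card V - 2"
  using fpf_involution_onD[OF assms] \<open>x \<in> V\<close>
  by (auto intro: fpf_involution_on_Diff[OF s] simp: card_Diff_subset)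

lemma image_image_fpf_involution: "fpf_involution_on V s \<Longrightarrow> a \<subseteq> V \<Longrightarrow> s ` s ` a = a"
  unfolding fpf_involution_on_def by (force simp: image_image)

lemma fpf_involution_orbits:
  assumes t: "fpf_involution_on A t"
  shows "(\<lambda>a. {a, t a}) ` A \<in> perfect_matchings_on A"
proof (rule perfect_matchings_onI)
  show "card c = 2" if c: "c \<in> (\<lambda>a. {a, t a}) ` A" for c
  proof -
    obtain a where "a \<in> A" "c = {a, t a}" using c by blast
    then show ?thesis using fpf_involution_onD(3)[OF t \<open>a \<in> A\<close>] by simp
  qed
  show "\<Union>((\<lambda>a. {a, t a}) ` A) = A"
    using fpf_involution_onD(1)[OF t] by auto
  have orbit: "{u, t u} = {v, t v}" if "u \<in> A" "v \<in> {u, t u}" for u v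
    using that fpf_involution_onD(2)[OF t \<open>u \<in> A\<close>] by auto
  show "c \<inter> d = {}" if "c \<in> (\<lambda>a. {a, t a}) ` A" "d \<in> (\<lambda>a. {a, t a}) ` A" "c \<noteq> d" for c d
    using that orbit by blast
qed

definition centered_arcs_wrt :: "('a \<Rightarrow> 'a) \<Rightarrow> 'a set set \<Rightarrow> 'a set set" where
  "centered_arcs_wrt s M = {a \<in> M. s ` a = a}"

definition coupled_arcs_wrt :: "('a \<Rightarrow> 'a) \<Rightarrow> 'a set set \<Rightarrow> 'a set set" where
  "coupled_arcs_wrt s M = {a \<in> M. s ` a \<noteq> a \<and> s ` a \<in> M}"

definition num_centered_wrt :: "('a \<Rightarrow> 'a) \<Rightarrow> 'a set set \<Rightarrow> nat" where
  "num_centered_wrt s M = card (centered_arcs_wrt s M)"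

definition num_coupled_pairs_wrt :: "('a \<Rightarrow> 'a) \<Rightarrow> 'a set set \<Rightarrow> nat" where
  "num_coupled_pairs_wrt s M = card ((\<lambda>a. {a, s ` a}) ` coupled_arcs_wrt s M)"

lemma fpf_involution_reflection: "fpf_involution_on {1..2*n} (\<lambda>i::nat. 2*n + 1 - i)"
  unfolding fpf_involution_on_def by auto presburger

lemma num_centered_eq_wrt: "num_centered n M = num_centered_wrt (\<lambda>i. 2*n + 1 - i) M"
  unfolding num_centered_def centered_arcs_def refl_set_def num_centered_wrt_def
    centered_arcs_wrt_def ..

lemma num_coupled_pairs_eq_wrt: "num_coupled_pairs n M = num_coupled_pairs_wrt (\<lambda>i. 2*n + 1 - i) M"
  unfolding num_coupled_pairs_def coupled_arcs_def refl_set_def num_coupled_pairs_wrt_def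
    coupled_arcs_wrt_def by (simp add: setcompr_eq_image)

lemma card_coupled_arcs_wrt:
  assumes s: "fpf_involution_on V s" and "finite V" and M: "M \<in> perfect_matchings_on V"
  shows "card (coupled_arcs_wrt s M) = 2 * num_coupled_pairs_wrt s M"
proof -
  have "fpf_involution_on (coupled_arcs_wrt s M) ((`) s)"
    using image_image_fpf_involution[OF s perfect_matchings_onD(2)[OF M]]
    unfolding fpf_involution_on_def coupled_arcs_wrt_def by auto
  then have "(\<lambda>a. {a, s ` a}) ` coupled_arcs_wrt s M \<in> perfect_matchings_on (coupled_arcs_wrt s M)"
    by (rule fpf_involution_orbits)
  moreover have "finite (coupled_arcs_wrt s M)"
    using finite_perfect_matching[OF M \<open>finite V\<close>] by (simp add: coupled_arcs_wrt_def)
  ultimately show ?thesis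
    unfolding num_coupled_pairs_wrt_def by (rule card_perfect_matching)
qed

lemma image_arc_notin_disjoint_matching:
  assumes M: "M \<in> perfect_matchings_on A" and N: "N \<in> perfect_matchings_on B"
    and "A \<inter> B = {}" and "s ` A \<subseteq> A" and "a \<in> M"
  shows "s ` a \<notin> N"
proof
  assume "s ` a \<in> N"
  then have "s ` a \<subseteq> A \<inter> B"
    using perfect_matchings_onD(2)[OF M \<open>a \<in> M\<close>] perfect_matchings_onD(2)[OF N] \<open>s ` A \<subseteq> A\<close> by blast
  moreover have "s ` a \<noteq> {}"
    using perfect_matchings_onD(1)[OF M \<open>a \<in> M\<close>] by auto
  ultimately show False using \<open>A \<inter> B = {}\<close> by blast
qed

lemma
  assumes s: "fpf_involution_on V s" and "finite V" and W: "W \<subseteq> V" "s ` W \<subseteq> W"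
    and M: "M \<in> perfect_matchings_on (V - W)" and p: "p \<in> perfect_matchings_on W"
  shows num_centered_wrt_Un:
      "num_centered_wrt s (M \<union> p) = num_centered_wrt s M + num_centered_wrt s p"
    and num_coupled_pairs_wrt_Un:
      "num_coupled_pairs_wrt s (M \<union> p) = num_coupled_pairs_wrt s M + num_coupled_pairs_wrt s p"
proof -
  have s_W: "fpf_involution_on W s" and s_VW: "fpf_involution_on (V - W) s"
    using fpf_involution_on_subset[OF s W] fpf_involution_on_Diff[OF s W(2)] .
  have "s ` (V - W) \<subseteq> V - W"
    using fpf_involution_onD(1)[OF s_VW] by blast
  then have reflect_M: "s ` a \<notin> p" if "a \<in> M" for a
    using image_arc_notin_disjoint_matching[OF M p _ _ that] by blast
  have reflect_p: "s ` a \<notin> M" if "a \<in> p" for a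
    using image_arc_notin_disjoint_matching[OF p M _ W(2) that] by blast
  have disj: "M \<inter> p = {}"
    by (rule perfect_matchings_on_disjoint[OF M p])
  have finite: "finite M" "finite p"
    using finite_perfect_matching[OF M] finite_perfect_matching[OF p] W \<open>finite V\<close>
    by (auto intro: finite_subset)
  have "centered_arcs_wrt s (M \<union> p) = centered_arcs_wrt s M \<union> centered_arcs_wrt s p"
    unfolding centered_arcs_wrt_def by blast
  then show "num_centered_wrt s (M \<union> p) = num_centered_wrt s M + num_centered_wrt s p"
    unfolding num_centered_wrt_def using finite disj
    by (simp add: card_Un_disjoint centered_arcs_wrt_def disjoint_iff)
  have "coupled_arcs_wrt s (M \<union> p) = coupled_arcs_wrt s M \<union> coupled_arcs_wrt s p"
    unfolding coupled_arcs_wrt_def using reflect_M reflect_p by blast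
  then have "card (coupled_arcs_wrt s (M \<union> p)) =
      card (coupled_arcs_wrt s M) + card (coupled_arcs_wrt s p)"
    using finite disj by (simp add: card_Un_disjoint coupled_arcs_wrt_def disjoint_iff)
  then show "num_coupled_pairs_wrt s (M \<union> p) = num_coupled_pairs_wrt s M + num_coupled_pairs_wrt s p"
    using card_coupled_arcs_wrt[OF s \<open>finite V\<close> perfect_matchings_on_Un[OF M p W(1)]]
      card_coupled_arcs_wrt[OF s_VW _ M] card_coupled_arcs_wrt[OF s_W _ p] W \<open>finite V\<close>
    by (simp add: finite_subset)
qed

lemma sum_perfect_matchings_containing:
  assumes s: "fpf_involution_on V s" and "finite V" and W: "W \<subseteq> V" "s ` W \<subseteq> W"
    and p: "p \<in> perfect_matchings_on W"
  shows "(\<Sum>M | M \<in> perfect_matchings_on V \<and> p \<subseteq> M.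
            f (num_centered_wrt s M - num_centered_wrt s p)
              (num_coupled_pairs_wrt s M - num_coupled_pairs_wrt s p))
       = (\<Sum>M\<in>perfect_matchings_on (V - W). f (num_centered_wrt s M) (num_coupled_pairs_wrt s M))"
proof -
  let ?F = "\<lambda>M. f (num_centered_wrt s M - num_centered_wrt s p)
      (num_coupled_pairs_wrt s M - num_coupled_pairs_wrt s p)"
  have "(\<Sum>M | M \<in> perfect_matchings_on V \<and> p \<subseteq> M. ?F M)
      = (\<Sum>M\<in>perfect_matchings_on (V - W). ?F (M \<union> p))"
    using sum.reindex_bij_betw[OF perfect_matchings_on_Un_bij[OF p W(1)], of ?F] by simp
  also have "\<dots> = (\<Sum>M\<in>perfect_matchings_on (V - W). f (num_centered_wrt s M) (num_coupled_pairs_wrt s M))"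
    by (rule sum.cong[OF refl])
      (simp add: num_centered_wrt_Un[OF assms(1-4) _ p] num_coupled_pairs_wrt_Un[OF assms(1-4) _ p])
  finally show ?thesis .
qed

lemma card_centered_points:
  assumes s: "fpf_involution_on V s" and "finite V" and M: "M \<in> perfect_matchings_on V"
  shows "card {x \<in> V. {x, s x} \<in> M} = 2 * num_centered_wrt s M"
proof -
  let ?C = "centered_arcs_wrt s M"
  have points: "{x \<in> V. {x, s x} \<in> M} = \<Union>?C"
  proof (intro equalityI subsetI)
    fix x assume x: "x \<in> {x \<in> V. {x, s x} \<in> M}"
    then have "s ` {x, s x} = {x, s x}"
      using fpf_involution_onD(2)[OF s] by auto
    with x have "{x, s x} \<in> ?C"
      by (simp add: centered_arcs_wrt_def)
    then show "x \<in> \<Union>?C" by blast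
  next
    fix x assume "x \<in> \<Union>?C"
    then obtain a where a: "a \<in> M" "s ` a = a" "x \<in> a"
      by (auto simp: centered_arcs_wrt_def)
    have "x \<in> V" using perfect_matchings_onD(2)[OF M a(1)] a(3) by blast
    have "s x \<in> a" using a(2,3) by (metis imageI)
    then have "a = {x, s x}"
      using fpf_involution_onD(3)[OF s \<open>x \<in> V\<close>]
      by (intro doubleton_if_card_2[OF perfect_matchings_onD(1)[OF M a(1)] a(3)]) auto
    with a \<open>x \<in> V\<close> show "x \<in> {x \<in> V. {x, s x} \<in> M}" by blast
  qed
  have "?C \<in> perfect_matchings_on (\<Union>?C)"
    using M by (rule perfect_matchings_on_subset) (auto simp: centered_arcs_wrt_def)
  moreover have "finite (\<Union>?C)"
    unfolding points[symmetric] using \<open>finite V\<close> by simp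
  ultimately show ?thesis
    unfolding num_centered_wrt_def points by (rule card_perfect_matching)
qed

lemma doubleton_mem_coupled_arcs_wrt_iff:
  assumes s: "fpf_involution_on V s" and M: "M \<in> perfect_matchings_on V"
  shows "{x, y} \<in> coupled_arcs_wrt s M \<longleftrightarrow>
    x \<in> V \<and> y \<in> V - {x, s x} \<and> {x, y} \<in> M \<and> {s x, s y} \<in> M"
proof
  assume "{x, y} \<in> coupled_arcs_wrt s M"
  then have xy: "{x, y} \<in> M" and "{s x, s y} \<in> M" and ne: "{s x, s y} \<noteq> {x, y}"
    by (auto simp: coupled_arcs_wrt_def)
  moreover note perfect_matching_doubleton[OF M xy]
  moreover have "y \<noteq> s x"
    using ne fpf_involution_onD(2)[OF s \<open>x \<in> V\<close>] by (auto simp: insert_commute)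
  ultimately show "x \<in> V \<and> y \<in> V - {x, s x} \<and> {x, y} \<in> M \<and> {s x, s y} \<in> M" by blast
next
  assume xy: "x \<in> V \<and> y \<in> V - {x, s x} \<and> {x, y} \<in> M \<and> {s x, s y} \<in> M"
  then have "s x \<notin> {x, y}"
    using fpf_involution_onD(3)[OF s] by auto
  then have "s ` {x, y} \<noteq> {x, y}" by auto
  with xy show "{x, y} \<in> coupled_arcs_wrt s M" by (simp add: coupled_arcs_wrt_def)
qed

lemma card_coupled_points:
  assumes s: "fpf_involution_on V s" and "finite V" and M: "M \<in> perfect_matchings_on V"
  shows "card {(x, y) \<in> Sigma V (\<lambda>x. V - {x, s x}). {x, y} \<in> M \<and> {s x, s y} \<in> M}
           = 4 * num_coupled_pairs_wrt s M"
proof -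
  let ?C = "coupled_arcs_wrt s M"
  have C: "?C \<in> perfect_matchings_on (\<Union>?C)"
    using M by (rule perfect_matchings_on_subset) (auto simp: coupled_arcs_wrt_def)
  have "finite (\<Union>?C)"
    using perfect_matchings_onD(2)[OF M] \<open>finite V\<close>
    by (auto simp: coupled_arcs_wrt_def intro: finite_subset[of _ V])
  have "{(x, y) \<in> Sigma V (\<lambda>x. V - {x, s x}). {x, y} \<in> M \<and> {s x, s y} \<in> M}
      = {(x, y). {x, y} \<in> ?C}"
    unfolding doubleton_mem_coupled_arcs_wrt_iff[OF s M] by blast
  then show ?thesis
    using card_ordered_arcs[OF C \<open>finite (\<Union>?C)\<close>] card_coupled_arcs_wrt[OF s \<open>finite V\<close> M] by simp
qed

definition binomial_moment_sum :: "('a \<Rightarrow> 'a) \<Rightarrow> 'a set \<Rightarrow> nat \<Rightarrow> nat \<Rightarrow> nat" where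
  "binomial_moment_sum s V a b = (\<Sum>M\<in>perfect_matchings_on V.
      (num_centered_wrt s M choose a) * (num_coupled_pairs_wrt s M choose b))"

lemma sum_swap_filter:
  assumes "finite A"
  shows "(\<Sum>M\<in>A. \<Sum>i\<in>I. if P i M then g i M else 0) = (\<Sum>i\<in>I. \<Sum>M | M \<in> A \<and> P i M. g i M)"
  using assms by (subst sum.swap) (simp add: sum.inter_filter)

lemma
  assumes s: "fpf_involution_on V s" and x: "x \<in> V"
  shows num_centered_wrt_orbit_arc: "num_centered_wrt s {{x, s x}} = 1"
    and num_coupled_pairs_wrt_orbit_arc: "num_coupled_pairs_wrt s {{x, s x}} = 0"
proof -
  have "s ` {x, s x} = {x, s x}"
    using fpf_involution_onD(2)[OF s x] by auto
  then have "centered_arcs_wrt s {{x, s x}} = {{x, s x}}" "coupled_arcs_wrt s {{x, s x}} = {}"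
    by (auto simp: centered_arcs_wrt_def coupled_arcs_wrt_def)
  then show "num_centered_wrt s {{x, s x}} = 1" "num_coupled_pairs_wrt s {{x, s x}} = 0"
    by (simp_all add: num_centered_wrt_def num_coupled_pairs_wrt_def)
qed

lemma
  assumes s: "fpf_involution_on V s" and x: "x \<in> V" and y: "y \<in> V - {x, s x}"
  shows perfect_matchings_on_coupled_pair:
      "{{x, y}, {s x, s y}} \<in> perfect_matchings_on {x, y, s x, s y}"
    and num_centered_wrt_coupled_pair: "num_centered_wrt s {{x, y}, {s x, s y}} = 0"
    and num_coupled_pairs_wrt_coupled_pair: "num_coupled_pairs_wrt s {{x, y}, {s x, s y}} = 1"
proof -
  let ?p = "{{x, y}, {s x, s y}}"
  note sx = fpf_involution_onD[OF s x] and sy = fpf_involution_onD[OF s, of y]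
  have ne: "s x \<noteq> s y" "s y \<noteq> x"
    using sx(2) sy(2) y by (metis DiffD1 DiffD2 insertCI)+
  show "?p \<in> perfect_matchings_on {x, y, s x, s y}"
    using sx sy y ne by (intro perfect_matchings_onI) auto
  have image: "s ` {x, y} = {s x, s y}" "s ` {s x, s y} = {x, y}" and "{s x, s y} \<noteq> {x, y}"
    using sx sy y by (auto simp: doubleton_eq_iff)
  then have "centered_arcs_wrt s ?p = {}" "coupled_arcs_wrt s ?p = ?p"
    by (auto simp: centered_arcs_wrt_def coupled_arcs_wrt_def)
  moreover have "(\<lambda>a. {a, s ` a}) ` ?p = {?p}"
    using image by (auto simp: insert_commute)
  ultimately show "num_centered_wrt s ?p = 0" "num_coupled_pairs_wrt s ?p = 1"
    by (simp_all add: num_centered_wrt_def num_coupled_pairs_wrt_def)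
qed

lemma binomial_moment_sum_Suc_left:
  assumes s: "fpf_involution_on V s" and "finite V"
  shows "2 * Suc a * binomial_moment_sum s V (Suc a) b
           = (\<Sum>x\<in>V. binomial_moment_sum s (V - {x, s x}) a b)"
proof -
  let ?X = "num_centered_wrt s" and ?Y = "num_coupled_pairs_wrt s"
  define g where "g M = (?X M - 1 choose a) * (?Y M - 0 choose b)" for M
  have per_matching: "2 * Suc a * ((?X M choose Suc a) * (?Y M choose b))
      = (\<Sum>x\<in>V. if {{x, s x}} \<subseteq> M then g M else 0)" if M: "M \<in> perfect_matchings_on V" for M
  proof -
    have "(\<Sum>x\<in>V. if {{x, s x}} \<subseteq> M then g M else 0) = card {x \<in> V. {x, s x} \<in> M} * g M"
      using \<open>finite V\<close> by (simp add: sum.inter_filter[symmetric])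
    also have "\<dots> = 2 * (Suc a * (?X M choose Suc a)) * (?Y M choose b)"
      unfolding card_centered_points[OF s \<open>finite V\<close> M] binomial_absorption g_def by simp
    finally show ?thesis by (simp add: algebra_simps)
  qed
  have "2 * Suc a * binomial_moment_sum s V (Suc a) b
      = (\<Sum>M\<in>perfect_matchings_on V. \<Sum>x\<in>V. if {{x, s x}} \<subseteq> M then g M else 0)"
    unfolding binomial_moment_sum_def sum_distrib_left by (rule sum.cong[OF refl per_matching])
  also have "\<dots> = (\<Sum>x\<in>V. \<Sum>M | M \<in> perfect_matchings_on V \<and> {{x, s x}} \<subseteq> M. g M)"
    using \<open>finite V\<close> by (simp add: sum_swap_filter finite_perfect_matchings_on)
  also have "\<dots> = (\<Sum>x\<in>V. binomial_moment_sum s (V - {x, s x}) a b)"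
  proof (rule sum.cong[OF refl])
    fix x assume x: "x \<in> V"
    note sx = fpf_involution_onD[OF s x]
    show "(\<Sum>M | M \<in> perfect_matchings_on V \<and> {{x, s x}} \<subseteq> M. g M)
        = binomial_moment_sum s (V - {x, s x}) a b"
      using sum_perfect_matchings_containing[OF s \<open>finite V\<close> _ _ perfect_matchings_on_doubleton,
          of x "s x" "\<lambda>i j. (i choose a) * (j choose b)"] x sx
      unfolding g_def binomial_moment_sum_def num_centered_wrt_orbit_arc[OF s x]
        num_coupled_pairs_wrt_orbit_arc[OF s x] by auto
  qed
  finally show ?thesis .
qed

lemma binomial_moment_sum_Suc_right:
  assumes s: "fpf_involution_on V s" and "finite V"
  shows "4 * Suc b * binomial_moment_sum s V a (Suc b)
           = (\<Sum>x\<in>V. \<Sum>y\<in>V - {x, s x}. binomial_moment_sum s (V - {x, s x} - {y, s y}) a b)"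
proof -
  let ?X = "num_centered_wrt s" and ?Y = "num_coupled_pairs_wrt s"
  let ?p = "\<lambda>x y. {{x, y}, {s x, s y}}" and ?S = "Sigma V (\<lambda>x. V - {x, s x})"
  define g where "g M = (?X M - 0 choose a) * (?Y M - 1 choose b)" for M
  have per_matching: "4 * Suc b * ((?X M choose a) * (?Y M choose Suc b))
      = (\<Sum>x\<in>V. \<Sum>y\<in>V - {x, s x}. if ?p x y \<subseteq> M then g M else 0)"
    if M: "M \<in> perfect_matchings_on V" for M
  proof -
    have "(\<Sum>x\<in>V. \<Sum>y\<in>V - {x, s x}. if ?p x y \<subseteq> M then g M else 0)
        = (\<Sum>(x, y)\<in>?S. if {x, y} \<in> M \<and> {s x, s y} \<in> M then g M else 0)"
      using \<open>finite V\<close> by (simp add: sum.Sigma)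
    also have "\<dots> = card {(x, y) \<in> ?S. {x, y} \<in> M \<and> {s x, s y} \<in> M} * g M"
      using sum.inter_filter[of ?S "\<lambda>_. g M" "\<lambda>(x, y). {x, y} \<in> M \<and> {s x, s y} \<in> M"] \<open>finite V\<close>
      by (simp only: split_def sum_constant prod.collapse of_nat_id finite_SigmaI finite_Diff)
    also have "\<dots> = 4 * (Suc b * (?Y M choose Suc b)) * (?X M choose a)"
      unfolding card_coupled_points[OF s \<open>finite V\<close> M] binomial_absorption g_def by simp
    finally show ?thesis by (simp add: algebra_simps)
  qed
  have "4 * Suc b * binomial_moment_sum s V a (Suc b)
      = (\<Sum>M\<in>perfect_matchings_on V. \<Sum>x\<in>V. \<Sum>y\<in>V - {x, s x}. if ?p x y \<subseteq> M then g M else 0)"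
    unfolding binomial_moment_sum_def sum_distrib_left by (rule sum.cong[OF refl per_matching])
  also have "\<dots> = (\<Sum>x\<in>V. \<Sum>y\<in>V - {x, s x}. \<Sum>M | M \<in> perfect_matchings_on V \<and> ?p x y \<subseteq> M. g M)"
    using \<open>finite V\<close> by (subst sum.swap) (simp add: sum_swap_filter finite_perfect_matchings_on)
  also have "\<dots> = (\<Sum>x\<in>V. \<Sum>y\<in>V - {x, s x}. binomial_moment_sum s (V - {x, s x} - {y, s y}) a b)"
  proof (intro sum.cong[OF refl])
    fix x y assume x: "x \<in> V" and y: "y \<in> V - {x, s x}"
    have "{x, y, s x, s y} \<subseteq> V" "s ` {x, y, s x, s y} \<subseteq> {x, y, s x, s y}"
      using fpf_involution_onD[OF s x] fpf_involution_onD[OF s, of y] x y by auto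
    moreover have "V - {x, y, s x, s y} = V - {x, s x} - {y, s y}" by auto
    ultimately show "(\<Sum>M | M \<in> perfect_matchings_on V \<and> ?p x y \<subseteq> M. g M)
        = binomial_moment_sum s (V - {x, s x} - {y, s y}) a b"
      using sum_perfect_matchings_containing[OF s \<open>finite V\<close> _ _ perfect_matchings_on_coupled_pair[OF s x y],
          of "\<lambda>i j. (i choose a) * (j choose b)"]
      unfolding g_def binomial_moment_sum_def num_centered_wrt_coupled_pair[OF s x y]
        num_coupled_pairs_wrt_coupled_pair[OF s x y] by simp
  qed
  finally show ?thesis .
qed

(* pair_ratio m = m (2m-3)!! / (2m-1)!!.  Since pair_ratio 0 = 0, binomial_moment n a b vanishes
   when a + 2b > n, as it must. *)
definition pair_ratio :: "nat \<Rightarrow> real" where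
  "pair_ratio m = real m / (2 * real m - 1)"

(* The joint binomial moment E[(X choose a) (Y choose b)] for a uniform perfect matching of [2n]. *)
definition binomial_moment :: "nat \<Rightarrow> nat \<Rightarrow> nat \<Rightarrow> real" where
  "binomial_moment n a b = (\<Prod>i<a + 2 * b. pair_ratio (n - i)) / (fact a * fact b)"

lemma odd_double_fact_pair_ratio:
  "real (odd_double_fact n) * pair_ratio n = real n * real (odd_double_fact (n - 1))"
  by (cases n) (simp_all add: odd_double_fact_def pair_ratio_def field_simps)

lemma binomial_moment_0_0 [simp]: "binomial_moment n 0 0 = 1"
  by (simp add: binomial_moment_def)

lemma prod_pair_ratio_Suc:
  "(\<Prod>i<Suc k. pair_ratio (n - i)) = pair_ratio n * (\<Prod>i<k. pair_ratio (n - 1 - i))"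
  by (simp add: prod.lessThan_Suc_shift diff_diff_left del: prod.lessThan_Suc)

lemma binomial_moment_Suc_left:
  "real (Suc a) * binomial_moment n (Suc a) b = pair_ratio n * binomial_moment (n - 1) a b"
  using prod_pair_ratio_Suc[where k = "a + 2 * b"] by (simp add: binomial_moment_def)

lemma binomial_moment_Suc_right:
  "real (Suc b) * binomial_moment n a (Suc b)
     = pair_ratio n * pair_ratio (n - 1) * binomial_moment (n - 2) a b"
  using prod_pair_ratio_Suc[where k = "Suc (a + 2 * b)"]
    prod_pair_ratio_Suc[where k = "a + 2 * b" and n = "n - 1"]
  by (simp add: binomial_moment_def diff_diff_left del: prod.lessThan_Suc)

lemma odd_double_fact_binomial_moment_Suc_left:
  "real (Suc a) * (real (odd_double_fact n) * binomial_moment n (Suc a) b)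
     = real n * (real (odd_double_fact (n - 1)) * binomial_moment (n - 1) a b)"
proof -
  have "real (Suc a) * (real (odd_double_fact n) * binomial_moment n (Suc a) b)
      = real (odd_double_fact n) * pair_ratio n * binomial_moment (n - 1) a b"
    by (metis binomial_moment_Suc_left mult.assoc mult.left_commute)
  then show ?thesis by (simp add: odd_double_fact_pair_ratio)
qed

lemma odd_double_fact_binomial_moment_Suc_right:
  "real (Suc b) * (real (odd_double_fact n) * binomial_moment n a (Suc b))
     = real n * real (n - 1) * (real (odd_double_fact (n - 2)) * binomial_moment (n - 2) a b)"
proof -
  have "real (Suc b) * (real (odd_double_fact n) * binomial_moment n a (Suc b))
      = real (odd_double_fact n) * pair_ratio n * pair_ratio (n - 1) * binomial_moment (n - 2) a b"
    by (metis binomial_moment_Suc_right mult.assoc mult.left_commute)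
  also have "\<dots> = real n * (real (odd_double_fact (n - 1)) * pair_ratio (n - 1)) * binomial_moment (n - 2) a b"
    by (simp add: odd_double_fact_pair_ratio)
  finally show ?thesis
    by (simp add: odd_double_fact_pair_ratio diff_diff_left numeral_2_eq_2)
qed

lemma binomial_moment_sum_eq_Suc_left:
  assumes s: "fpf_involution_on V s" and fin: "finite V" and card_V: "card V = 2 * n"
    and IH: "\<And>x. x \<in> V \<Longrightarrow> real (binomial_moment_sum s (V - {x, s x}) a b)
      = real (odd_double_fact (n - 1)) * binomial_moment (n - 1) a b"
  shows "real (binomial_moment_sum s V (Suc a) b) = real (odd_double_fact n) * binomial_moment n (Suc a) b"
proof -
  have "real (2 * Suc a * binomial_moment_sum s V (Suc a) b)
      = (\<Sum>x\<in>V. real (binomial_moment_sum s (V - {x, s x}) a b))"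
    by (simp only: binomial_moment_sum_Suc_left[OF s fin] of_nat_sum)
  also have "\<dots> = (\<Sum>x\<in>V. real (odd_double_fact (n - 1)) * binomial_moment (n - 1) a b)"
    by (rule sum.cong[OF refl IH])
  also have "\<dots> = 2 * (real n * (real (odd_double_fact (n - 1)) * binomial_moment (n - 1) a b))"
    using card_V by simp
  also have "\<dots> = 2 * (real (Suc a) * (real (odd_double_fact n) * binomial_moment n (Suc a) b))"
    by (simp only: odd_double_fact_binomial_moment_Suc_left)
  finally have "real (2 * Suc a) * real (binomial_moment_sum s V (Suc a) b)
      = real (2 * Suc a) * (real (odd_double_fact n) * binomial_moment n (Suc a) b)"
    by (simp only: of_nat_mult of_nat_numeral mult.assoc)
  then show ?thesis by (subst (asm) mult_left_cancel) simp_all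
qed

lemma binomial_moment_sum_eq_Suc_right:
  assumes s: "fpf_involution_on V s" and fin: "finite V" and card_V: "card V = 2 * n"
    and IH: "\<And>x y. x \<in> V \<Longrightarrow> y \<in> V - {x, s x} \<Longrightarrow>
      real (binomial_moment_sum s (V - {x, s x} - {y, s y}) a b)
        = real (odd_double_fact (n - 2)) * binomial_moment (n - 2) a b"
  shows "real (binomial_moment_sum s V a (Suc b)) = real (odd_double_fact n) * binomial_moment n a (Suc b)"
proof -
  let ?m = "real (odd_double_fact (n - 2)) * binomial_moment (n - 2) a b"
  have "real (4 * Suc b * binomial_moment_sum s V a (Suc b))
      = (\<Sum>x\<in>V. \<Sum>y\<in>V - {x, s x}. real (binomial_moment_sum s (V - {x, s x} - {y, s y}) a b))"
    by (simp only: binomial_moment_sum_Suc_right[OF s fin] of_nat_sum)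
  also have "\<dots> = (\<Sum>x\<in>V. \<Sum>y\<in>V - {x, s x}. ?m)"
    by (intro sum.cong refl IH)
  also have "\<dots> = real (card V * (card V - 2)) * ?m"
    using fpf_involution_remove_orbit(2)[OF s] by simp
  also have "card V * (card V - 2) = 4 * (n * (n - 1))"
    using card_V by (cases n) (simp_all add: algebra_simps)
  also have "real (4 * (n * (n - 1))) * ?m
      = 4 * (real (Suc b) * (real (odd_double_fact n) * binomial_moment n a (Suc b)))"
    by (simp only: odd_double_fact_binomial_moment_Suc_right of_nat_mult of_nat_numeral mult.assoc)
  finally have "real (4 * Suc b) * real (binomial_moment_sum s V a (Suc b))
      = real (4 * Suc b) * (real (odd_double_fact n) * binomial_moment n a (Suc b))"
    by (simp only: of_nat_mult of_nat_numeral mult.assoc)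
  then show ?thesis by (subst (asm) mult_left_cancel) simp_all
qed

lemma binomial_moment_sum_eq:
  assumes "fpf_involution_on V s" "finite V" "card V = 2 * n"
  shows "real (binomial_moment_sum s V a b) = real (odd_double_fact n) * binomial_moment n a b"
  using assms
proof (induction n arbitrary: V a b rule: less_induct)
  case (less n)
  note s = less.prems(1) and fin = less.prems(2) and card_V = less.prems(3)
  have IH_orbit: "real (binomial_moment_sum s (V - {x, s x}) a' b')
      = real (odd_double_fact (n - 1)) * binomial_moment (n - 1) a' b'" if x: "x \<in> V" for x a' b'
  proof (rule less.IH)
    show "n - 1 < n" using card_V fin x by (cases n) auto
    show "fpf_involution_on (V - {x, s x}) s" "finite (V - {x, s x})"
      "card (V - {x, s x}) = 2 * (n - 1)"
      using fpf_involution_remove_orbit[OF s x] card_V fin by auto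
  qed
  have IH_two_orbits: "real (binomial_moment_sum s (V - {x, s x} - {y, s y}) a' b')
      = real (odd_double_fact (n - 2)) * binomial_moment (n - 2) a' b'"
    if x: "x \<in> V" and y: "y \<in> V - {x, s x}" for x y a' b'
  proof (rule less.IH)
    note orbit_x = fpf_involution_remove_orbit[OF s x]
    note orbit_y = fpf_involution_remove_orbit[OF orbit_x(1) y]
    show "n - 2 < n" using card_V fin x by (cases n) auto
    show "fpf_involution_on (V - {x, s x} - {y, s y}) s" "finite (V - {x, s x} - {y, s y})"
      "card (V - {x, s x} - {y, s y}) = 2 * (n - 2)"
      using orbit_x orbit_y card_V fin by auto
  qed
  consider "a = 0" "b = 0" | a' where "a = Suc a'" | b' where "b = Suc b'"
    using not0_implies_Suc by blast
  then show ?case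
  proof cases
    case 1
    then show ?thesis
      using card_perfect_matchings_on[OF fin card_V] by (simp add: binomial_moment_sum_def)
  qed (use binomial_moment_sum_eq_Suc_left[OF s fin card_V IH_orbit]
      binomial_moment_sum_eq_Suc_right[OF s fin card_V IH_two_orbits] in simp_all)
qed

lemma pm_prob_eq_sum_binomial_moments:
  fixes u v :: "nat \<Rightarrow> real"
  assumes indicator: "\<And>M. M \<in> perfect_matchings n \<Longrightarrow> of_bool (P M)
      = (\<Sum>a\<le>n. u a * real (num_centered n M choose a))
        * (\<Sum>b\<le>n. v b * real (num_coupled_pairs n M choose b))"
  shows "pm_prob n P = (\<Sum>a\<le>n. \<Sum>b\<le>n. u a * v b * binomial_moment n a b)"
proof -
  define s where "s = (\<lambda>i::nat. 2 * n + 1 - i)"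
  define PM where "PM = perfect_matchings n"
  have s: "fpf_involution_on {1..2*n} s"
    unfolding s_def by (rule fpf_involution_reflection)
  have card_V: "card {1..2*n} = 2 * n" by simp
  have PM: "PM = perfect_matchings_on {1..2*n}"
    unfolding PM_def by (rule perfect_matchings_eq)
  have card_PM: "card PM = odd_double_fact n"
    unfolding PM using card_perfect_matchings_on[OF _ card_V] by simp
  let ?C = "\<lambda>a b M. real (num_centered_wrt s M choose a) * real (num_coupled_pairs_wrt s M choose b)"
  have "real (card {M \<in> PM. P M}) = (\<Sum>M\<in>PM. of_bool (P M))"
    using PM by (simp add: sum.inter_filter[symmetric] finite_perfect_matchings_on Int_def)
  also have "\<dots> = (\<Sum>M\<in>PM. \<Sum>a\<le>n. \<Sum>b\<le>n. u a * v b * ?C a b M)"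
    by (rule sum.cong[OF refl])
      (simp add: indicator PM_def s_def num_centered_eq_wrt num_coupled_pairs_eq_wrt
        sum_product mult_ac)
  also have "\<dots> = (\<Sum>a\<le>n. \<Sum>b\<le>n. u a * v b * (\<Sum>M\<in>PM. ?C a b M))"
    by (subst sum.swap) (simp add: sum.swap[of _ PM] sum_distrib_left)
  also have "\<dots> = (\<Sum>a\<le>n. \<Sum>b\<le>n. u a * v b * real (binomial_moment_sum s {1..2*n} a b))"
    by (simp add: binomial_moment_sum_def PM)
  also have "\<dots> = real (odd_double_fact n) * (\<Sum>a\<le>n. \<Sum>b\<le>n. u a * v b * binomial_moment n a b)"
    unfolding binomial_moment_sum_eq[OF s finite_atLeastAtMost card_V]
    by (simp add: sum_distrib_left mult_ac)
  finally show ?thesis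
    using card_PM by (simp add: pm_prob_def PM_def odd_double_fact_def)
qed

lemma pair_ratio_bounds: "0 \<le> pair_ratio m" "pair_ratio m \<le> 1"
  by (cases "m = 0"; simp add: pair_ratio_def divide_le_eq)+

lemma binomial_moment_nonneg: "0 \<le> binomial_moment n a b"
  unfolding binomial_moment_def by (simp add: prod_nonneg pair_ratio_bounds)

lemma binomial_moment_le: "binomial_moment n a b \<le> 1 / (fact a * fact b)"
  unfolding binomial_moment_def
  by (intro divide_right_mono prod_le_1) (simp_all add: pair_ratio_bounds)

lemma tendsto_pair_ratio: "(\<lambda>n. pair_ratio (n - i)) \<longlonglongrightarrow> 1 / 2"
proof -
  have "pair_ratio \<longlonglongrightarrow> 1 / 2"
    unfolding pair_ratio_def by real_asymp
  then show ?thesis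
    using LIMSEQ_offset[of "\<lambda>n. pair_ratio (n - i)" i] by simp
qed

lemma tendsto_binomial_moment:
  "(\<lambda>n. binomial_moment n a b) \<longlonglongrightarrow> 1 / (fact a * fact b * 2 ^ a * 4 ^ b)"
proof -
  have "(\<lambda>n. binomial_moment n a b) \<longlonglongrightarrow> (\<Prod>i<a + 2 * b. 1 / 2) / (fact a * fact b)"
    unfolding binomial_moment_def by (intro tendsto_intros tendsto_pair_ratio) simp
  also have "(\<Prod>i<a + 2 * b. 1 / 2) / (fact a * fact b) = 1 / (fact a * fact b * 2 ^ a * 4 ^ b :: real)"
    by (simp add: power_add power_mult field_simps power2_eq_square flip: power_mult_distrib)
  finally show ?thesis .
qed

lemma tendsto_sum_atMost_tannery:
  fixes f :: "nat \<Rightarrow> nat \<Rightarrow> real"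
  assumes lim: "\<And>k. (\<lambda>n. f k n) \<longlonglongrightarrow> g k"
    and bound: "\<And>k n. \<bar>f k n\<bar> \<le> B k" and "summable B"
  shows "(\<lambda>n. \<Sum>k\<le>n. f k n) \<longlonglongrightarrow> (\<Sum>k. g k)"
proof -
  define f' where "f' k n = (if k \<le> n then f k n else 0)" for k n
  have "(\<lambda>n. f' k n) \<longlonglongrightarrow> g k" for k
  proof (rule Lim_transform_eventually[OF lim])
    show "\<forall>\<^sub>F n in sequentially. f k n = f' k n"
      using eventually_ge_at_top[of k] by eventually_elim (simp add: f'_def)
  qed
  moreover have "\<forall>\<^sub>F (k, n) in at_top \<times>\<^sub>F sequentially. norm (f' k n) \<le> B k"
    using bound order_trans[OF abs_ge_zero bound] by (intro always_eventually) (auto simp: f'_def)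
  ultimately have "(\<lambda>n. \<Sum>k. f' k n) \<longlonglongrightarrow> (\<Sum>k. g k)"
    using tannerys_theorem \<open>summable B\<close> by fastforce
  moreover have "(\<Sum>k. f' k n) = (\<Sum>k\<le>n. f k n)" for n
    by (subst suminf_finite[of "{..n}"]) (auto simp: f'_def)
  ultimately show ?thesis by simp
qed

lemma summable_divide_fact_power:
  fixes v :: "nat \<Rightarrow> real"
  assumes "summable (\<lambda>b. \<bar>v b\<bar> / fact b)" and "1 \<le> c"
  shows "summable (\<lambda>b. v b / (fact b * c ^ b))"
proof (rule summable_comparison_test[OF _ assms(1)])
  have "\<bar>v b\<bar> / (fact b * c ^ b) \<le> \<bar>v b\<bar> / fact b" for b
    using assms(2) by (intro divide_left_mono) (simp_all add: one_le_power)
  then show "\<exists>N. \<forall>b\<ge>N. norm (v b / (fact b * c ^ b)) \<le> \<bar>v b\<bar> / fact b"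
    using assms(2) by (simp add: abs_mult)
qed

lemma abs_binomial_moment_term_le:
  "\<bar>u a * v b * binomial_moment n a b\<bar> \<le> \<bar>u a\<bar> / fact a * (\<bar>v b\<bar> / fact b)"
proof -
  have "\<bar>u a * v b * binomial_moment n a b\<bar> = \<bar>u a\<bar> * \<bar>v b\<bar> * binomial_moment n a b"
    by (simp add: abs_mult binomial_moment_nonneg)
  also have "\<dots> \<le> \<bar>u a\<bar> * \<bar>v b\<bar> * (1 / (fact a * fact b))"
    by (intro mult_left_mono binomial_moment_le) simp
  finally show ?thesis by simp
qed

lemma tendsto_sum_binomial_moments_row:
  fixes u v :: "nat \<Rightarrow> real"
  assumes sv: "summable (\<lambda>b. \<bar>v b\<bar> / fact b)"
  shows "(\<lambda>n. \<Sum>b\<le>n. u a * v b * binomial_moment n a b)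
           \<longlonglongrightarrow> u a / (fact a * 2 ^ a) * (\<Sum>b. v b / (fact b * 4 ^ b))"
proof -
  have "(\<lambda>n. u a * v b * binomial_moment n a b)
      \<longlonglongrightarrow> u a * v b * (1 / (fact a * fact b * 2 ^ a * 4 ^ b))" for b
    by (intro tendsto_intros tendsto_binomial_moment)
  also have "u a * v b * (1 / (fact a * fact b * 2 ^ a * 4 ^ b))
      = u a / (fact a * 2 ^ a) * (v b / (fact b * 4 ^ b))" for b
    by simp
  finally have "(\<lambda>n. \<Sum>b\<le>n. u a * v b * binomial_moment n a b)
      \<longlonglongrightarrow> (\<Sum>b. u a / (fact a * 2 ^ a) * (v b / (fact b * 4 ^ b)))"
    by (rule tendsto_sum_atMost_tannery[where B = "\<lambda>b. \<bar>u a\<bar> / fact a * (\<bar>v b\<bar> / fact b)"])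
      (rule abs_binomial_moment_term_le, rule summable_mult[OF sv])
  also have "(\<Sum>b. u a / (fact a * 2 ^ a) * (v b / (fact b * 4 ^ b)))
      = u a / (fact a * 2 ^ a) * (\<Sum>b. v b / (fact b * 4 ^ b))"
    by (intro suminf_mult summable_divide_fact_power[OF sv]) simp
  finally show ?thesis .
qed

lemma tendsto_sum_binomial_moments:
  fixes u v :: "nat \<Rightarrow> real"
  assumes su: "summable (\<lambda>a. \<bar>u a\<bar> / fact a)" and sv: "summable (\<lambda>b. \<bar>v b\<bar> / fact b)"
  shows "(\<lambda>n. \<Sum>a\<le>n. \<Sum>b\<le>n. u a * v b * binomial_moment n a b)
           \<longlonglongrightarrow> (\<Sum>a. u a / (fact a * 2 ^ a)) * (\<Sum>b. v b / (fact b * 4 ^ b))"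
proof -
  define W where "W = (\<Sum>b. v b / (fact b * 4 ^ b))"
  have row_bound: "\<bar>\<Sum>b\<le>n. u a * v b * binomial_moment n a b\<bar>
      \<le> \<bar>u a\<bar> / fact a * (\<Sum>b. \<bar>v b\<bar> / fact b)" for a n
  proof -
    have "\<bar>\<Sum>b\<le>n. u a * v b * binomial_moment n a b\<bar>
        \<le> (\<Sum>b\<le>n. \<bar>u a\<bar> / fact a * (\<bar>v b\<bar> / fact b))"
      by (rule order_trans[OF sum_abs sum_mono[OF abs_binomial_moment_term_le]])
    also have "\<dots> \<le> \<bar>u a\<bar> / fact a * (\<Sum>b. \<bar>v b\<bar> / fact b)"
      unfolding sum_distrib_left[symmetric] by (intro mult_left_mono sum_le_suminf[OF sv]) auto
    finally show ?thesis .
  qed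
  have "(\<lambda>n. \<Sum>a\<le>n. \<Sum>b\<le>n. u a * v b * binomial_moment n a b)
      \<longlonglongrightarrow> (\<Sum>a. u a / (fact a * 2 ^ a) * W)"
    unfolding W_def
    by (rule tendsto_sum_atMost_tannery[OF tendsto_sum_binomial_moments_row[OF sv, where u = u] row_bound
          summable_mult2[OF su]])
  also have "(\<Sum>a. u a / (fact a * 2 ^ a) * W) = (\<Sum>a. u a / (fact a * 2 ^ a)) * W"
    using suminf_mult2[OF summable_divide_fact_power[OF su], of 2 W] by simp
  finally show ?thesis unfolding W_def .
qed

lemma tendsto_pm_prob:
  fixes u v :: "nat \<Rightarrow> real"
  assumes "\<And>n M. M \<in> perfect_matchings n \<Longrightarrow> of_bool (P n M)
      = (\<Sum>a\<le>n. u a * real (num_centered n M choose a))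
        * (\<Sum>b\<le>n. v b * real (num_coupled_pairs n M choose b))"
    and "summable (\<lambda>a. \<bar>u a\<bar> / fact a)" and "summable (\<lambda>b. \<bar>v b\<bar> / fact b)"
  shows "(\<lambda>n. pm_prob n (P n)) \<longlonglongrightarrow> (\<Sum>a. u a / (fact a * 2 ^ a)) * (\<Sum>b. v b / (fact b * 4 ^ b))"
  using tendsto_sum_binomial_moments[OF assms(2,3)]
  by (simp add: pm_prob_eq_sum_binomial_moments[OF assms(1)])

lemma summable_abs_divide_fact:
  fixes u :: "nat \<Rightarrow> real"
  assumes "\<And>a. \<bar>u a\<bar> \<le> 2 ^ a"
  shows "summable (\<lambda>a. \<bar>u a\<bar> / fact a)"
proof (rule summable_comparison_test[OF _ summable_exp[of 2]])
  show "\<exists>N. \<forall>a\<ge>N. norm (\<bar>u a\<bar> / fact a) \<le> inverse (fact a) * 2 ^ a"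
    using assms by (simp add: divide_right_mono field_simps)
qed

definition binomial_inversion_coeff :: "nat \<Rightarrow> nat \<Rightarrow> real" where
  "binomial_inversion_coeff k a = (if k \<le> a then (-1) ^ (a - k) * real (a choose k) else 0)"

lemma sum_binomial_inversion_coeff:
  assumes "X \<le> N"
  shows "(\<Sum>a\<le>N. binomial_inversion_coeff k a * real (X choose a)) = of_bool (X = k)"
proof (cases "k \<le> X")
  case False
  then show ?thesis
    by (auto simp: binomial_inversion_coeff_def intro!: sum.neutral)
next
  case True
  have "(\<Sum>a\<le>N. binomial_inversion_coeff k a * real (X choose a))
      = (\<Sum>a\<in>{0 + k..(X - k) + k}. binomial_inversion_coeff k a * real (X choose a))"
    using True assms by (intro sum.mono_neutral_right) (auto simp: binomial_inversion_coeff_def)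
  also have "\<dots> = (\<Sum>i\<le>X - k. real (X choose k) * ((-1) ^ i * real ((X - k) choose i)))"
  proof (subst sum.shift_bounds_cl_nat_ivl, rule sum.cong)
    fix i assume "i \<in> {..X - k}"
    then have "(X choose (i + k)) * ((i + k) choose k) = (X choose k) * ((X - k) choose i)"
      using choose_mult[of k "i + k" X] True by simp
    then show "binomial_inversion_coeff k (i + k) * real (X choose (i + k))
        = real (X choose k) * ((-1) ^ i * real ((X - k) choose i))"
      unfolding binomial_inversion_coeff_def by (simp add: algebra_simps flip: of_nat_mult)
  qed auto
  also have "\<dots> = of_bool (X = k)"
    using True choose_alternating_sum[of "X - k"] by (auto simp: sum_distrib_left[symmetric])
  finally show ?thesis .
qed

lemma summable_binomial_inversion_coeff: "summable (\<lambda>a. \<bar>binomial_inversion_coeff k a\<bar> / fact a)"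
proof (rule summable_abs_divide_fact)
  fix a
  have "real (a choose k) \<le> 2 ^ a"
    using binomial_le_pow2[of a k] by (metis of_nat_le_iff of_nat_numeral of_nat_power)
  then show "\<bar>binomial_inversion_coeff k a\<bar> \<le> 2 ^ a"
    by (simp add: binomial_inversion_coeff_def abs_mult)
qed

lemma suminf_binomial_inversion_coeff:
  assumes "0 < c"
  shows "(\<Sum>a. binomial_inversion_coeff k a / (fact a * c ^ a)) = exp (- 1 / c) / (c ^ k * fact k)"
proof -
  define f where "f a = binomial_inversion_coeff k a / (fact a * c ^ a)" for a
  have shift: "f (i + k) = 1 / (c ^ k * fact k) * ((- 1 / c) ^ i /\<^sub>R fact i)" for i
  proof -
    have "real ((i + k) choose k) = fact (i + k) / (fact k * fact i)"
      using binomial_fact[of k "i + k"] by simp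
    then show ?thesis
      using assms by (simp add: f_def binomial_inversion_coeff_def field_simps power_add power_minus')
  qed
  have "(\<lambda>i. f (i + k)) sums (1 / (c ^ k * fact k) * exp (- 1 / c))"
    unfolding shift by (rule sums_mult[OF exp_converges])
  moreover have "(\<Sum>i<k. f i) = 0"
    by (simp add: f_def binomial_inversion_coeff_def)
  ultimately have "f sums (exp (- 1 / c) / (c ^ k * fact k))"
    by (simp add: sums_iff_shift)
  then show ?thesis
    unfolding f_def by (rule sums_unique[symmetric])
qed

lemma sum_of_bool_zero_choose: "(\<Sum>b\<le>N. of_bool (b = 0) * real (Y choose b)) = 1"
  by (simp add: sum.delta)

lemma suminf_of_bool_zero: "(\<Sum>b. of_bool (b = 0) / (fact b * (c::real) ^ b)) = 1"
  by (subst suminf_finite[of "{0}"]) auto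

lemma summable_of_bool_zero: "summable (\<lambda>b. of_bool (b = 0) / fact b :: real)"
  using summable_abs_divide_fact[of "\<lambda>b. of_bool (b = 0)"] by simp

lemma
  assumes "M \<in> perfect_matchings n"
  shows num_centered_le: "num_centered n M \<le> n"
    and num_coupled_pairs_le: "num_coupled_pairs n M \<le> n"
proof -
  have M: "M \<in> perfect_matchings_on {1..2*n}"
    using assms by (simp add: perfect_matchings_eq)
  have "card M = n" "finite M"
    using card_perfect_matching[OF M] finite_perfect_matching[OF M] by simp_all
  moreover have "centered_arcs n M \<subseteq> M" "coupled_arcs n M \<subseteq> M"
    by (auto simp: centered_arcs_def coupled_arcs_def)
  ultimately show "num_centered n M \<le> n"
    unfolding num_centered_def by (metis card_mono)
  have "2 * num_coupled_pairs n M = card (coupled_arcs n M)"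
    using card_coupled_arcs_wrt[OF fpf_involution_reflection _ M]
    by (simp add: num_coupled_pairs_eq_wrt coupled_arcs_def coupled_arcs_wrt_def refl_set_def)
  with \<open>card M = n\<close> \<open>finite M\<close> \<open>coupled_arcs n M \<subseteq> M\<close> show "num_coupled_pairs n M \<le> n"
    by (metis card_mono le_add2 mult_2 order_trans)
qed

lemma tendsto_pm_prob_num_centered:
  "(\<lambda>n. pm_prob n (\<lambda>M. num_centered n M = k)) \<longlonglongrightarrow> exp (-1/2) / (2 ^ k * fact k)"
proof -
  have "(\<lambda>n. pm_prob n (\<lambda>M. num_centered n M = k))
      \<longlonglongrightarrow> (\<Sum>a. binomial_inversion_coeff k a / (fact a * 2 ^ a))
          * (\<Sum>b. of_bool (b = 0) / (fact b * 4 ^ b))"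
    by (rule tendsto_pm_prob) (simp_all add: sum_binomial_inversion_coeff num_centered_le
        sum_of_bool_zero_choose summable_binomial_inversion_coeff summable_of_bool_zero)
  then show ?thesis
    by (simp add: suminf_binomial_inversion_coeff suminf_of_bool_zero)
qed

lemma tendsto_pm_prob_num_coupled_pairs:
  "(\<lambda>n. pm_prob n (\<lambda>M. num_coupled_pairs n M = l)) \<longlonglongrightarrow> exp (-1/4) / (4 ^ l * fact l)"
proof -
  have "(\<lambda>n. pm_prob n (\<lambda>M. num_coupled_pairs n M = l))
      \<longlonglongrightarrow> (\<Sum>a. of_bool (a = 0) / (fact a * 2 ^ a))
          * (\<Sum>b. binomial_inversion_coeff l b / (fact b * 4 ^ b))"
    by (rule tendsto_pm_prob) (simp_all add: sum_binomial_inversion_coeff num_coupled_pairs_le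
        sum_of_bool_zero_choose summable_binomial_inversion_coeff summable_of_bool_zero)
  then show ?thesis
    by (simp add: suminf_binomial_inversion_coeff suminf_of_bool_zero)
qed

lemma tendsto_pm_prob_num_centered_num_coupled_pairs:
  "(\<lambda>n. pm_prob n (\<lambda>M. num_centered n M = k \<and> num_coupled_pairs n M = l))
     \<longlonglongrightarrow> exp (-3/4) / (2 ^ k * 4 ^ l * fact k * fact l)"
proof -
  have "(\<lambda>n. pm_prob n (\<lambda>M. num_centered n M = k \<and> num_coupled_pairs n M = l))
      \<longlonglongrightarrow> (\<Sum>a. binomial_inversion_coeff k a / (fact a * 2 ^ a))
          * (\<Sum>b. binomial_inversion_coeff l b / (fact b * 4 ^ b))"
    by (rule tendsto_pm_prob) (simp_all add: sum_binomial_inversion_coeff num_centered_le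
        num_coupled_pairs_le summable_binomial_inversion_coeff)
  moreover have "exp (- 1 / 2) * exp (- 1 / 4) = exp (- 3 / 4 :: real)"
    by (simp flip: exp_add)
  ultimately show ?thesis
    by (simp add: suminf_binomial_inversion_coeff field_simps)
qed

theorem corollary5p2:
  fixes k l :: nat
  shows "((\<lambda>n. pm_prob n (\<lambda>M. num_centered n M = k))
           \<longlonglongrightarrow> exp (-1/2) / (2 ^ k * fact k)) \<and>
         ((\<lambda>n. pm_prob n (\<lambda>M. num_coupled_pairs n M = l))
           \<longlonglongrightarrow> exp (-1/4) / (4 ^ l * fact l)) \<and>
         ((\<lambda>n. pm_prob n (\<lambda>M. num_centered n M = k \<and> num_coupled_pairs n M = l))
           \<longlonglongrightarrow> exp (-3/4) / (2 ^ k * 4 ^ l * fact k * fact l))"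
  using tendsto_pm_prob_num_centered tendsto_pm_prob_num_coupled_pairs
    tendsto_pm_prob_num_centered_num_coupled_pairs by blast

end
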